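(* The inequality $$\sup_{s\in\Omega_1}\big\{|F(s,\psi)|+|G(s,\psi)|\big\}<\mathcal{L}^3\log\mathcal{L}$$ holds for all but at most $O\big((\log\mathcal{L})^{-2}Q^2\big)$ characters $\psi\in\Psi$.
   Context: $\chi$ is a real primitive Dirichlet character of modulus $D$, where $D$ exceeds a sufficiently large absolute constant; implied constants are absolute. $\mathcal{L}=\log D$, $Q=\exp(\mathcal{L}^2)$, $\alpha=\mathcal{L}^{-2}$, $s_0=\tfrac12+iD$, $\Omega_1=\{s:-2\alpha^{1/2}<\mathrm{Re}(s-s_0)<1,\ |\mathrm{Im}(s-s_0)|<1+20\mathcal{L}\}$. Define $\nu,\upsilon$ by $\sum\nu(n)n^{-s}=\zeta(s)L(s,\chi)$, $\sum\upsilon(n)n^{-s}=\zeta(s)^{-1}L(s,\chi)^{-1}$, and $F(s,\psi)=\sum_{n\le D^5}\nu(n)\psi(n)n^{-s}$, $G(s,\psi)=\sum_{n\le D^5}\upsilon(n)\psi(n)n^{-s}$. Let $\mathcal{Q}$ be the set of integers $q$ with $Q<q<2Q$, $\gcd(q,6)=1$, $q$ squarefree; $\Psi_q$ the set of primitive characters $\psi\bmod q$ with $\psi\chi$ primitive modulo $\mathrm{lcm}(q,D)$; $\Psi=\bigcup_{q\in\mathcal{Q}}\Psi_q$. *)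

theory Defs
  imports "HOL-Analysis.Analysis" "HOL-Computational_Algebra.Squarefree"
    "HOL-Number_Theory.Cong"
begin

definition dirichlet_char :: "nat \<Rightarrow> (nat \<Rightarrow> complex) \<Rightarrow> bool" where
  "dirichlet_char q chi \<longleftrightarrow> q \<ge> 1 \<and>
     (\<forall>m n. chi (m * n) = chi m * chi n) \<and>
     (\<forall>n. chi (n + q) = chi n) \<and>
     (\<forall>n. chi n = 0 \<longleftrightarrow> \<not> coprime n q)"

text \<open>Primitive: not induced by any character of a smaller modulus d dividing q,
  i.e. for every proper divisor d of q, chi is not identically 1 on the reduced
  residues that are congruent to 1 modulo d.\<close>
definition primitive_char :: "nat \<Rightarrow> (nat \<Rightarrow> complex) \<Rightarrow> bool" where
  "primitive_char q chi \<longleftrightarrow> dirichlet_char q chi \<and>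
     (\<forall>d. d dvd q \<and> d < q \<longrightarrow>
        (\<exists>a. coprime a q \<and> [a = 1] (mod d) \<and> chi a \<noteq> 1))"

definition real_char :: "(nat \<Rightarrow> complex) \<Rightarrow> bool" where
  "real_char chi \<longleftrightarrow> (\<forall>n. chi n \<in> \<real>)"

definition mu :: "nat \<Rightarrow> int" where
  "mu n = (if n = 0 \<or> \<not> squarefree n then 0 else (-1) ^ card (prime_factors n))"

text \<open>nu: coefficients of zeta(s) L(s,chi), i.e. the Dirichlet convolution 1 * chi.\<close>
definition nu :: "(nat \<Rightarrow> complex) \<Rightarrow> nat \<Rightarrow> complex" where
  "nu chi n = (\<Sum>d | d dvd n \<and> d > 0. chi d)"

text \<open>upsilon: coefficients of zeta(s)^(-1) L(s,chi)^(-1), i.e. the Dirichlet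
  convolution mu * (mu chi).\<close>
definition upsilon :: "(nat \<Rightarrow> complex) \<Rightarrow> nat \<Rightarrow> complex" where
  "upsilon chi n = (\<Sum>d | d dvd n \<and> d > 0. of_int (mu (n div d)) * of_int (mu d) * chi d)"

definition Fsum :: "nat \<Rightarrow> (nat \<Rightarrow> complex) \<Rightarrow> complex \<Rightarrow> (nat \<Rightarrow> complex) \<Rightarrow> complex" where
  "Fsum D chi s psi = (\<Sum>n=1..D^5. nu chi n * psi n * (of_nat n) powr (-s))"

definition Gsum :: "nat \<Rightarrow> (nat \<Rightarrow> complex) \<Rightarrow> complex \<Rightarrow> (nat \<Rightarrow> complex) \<Rightarrow> complex" where
  "Gsum D chi s psi = (\<Sum>n=1..D^5. upsilon chi n * psi n * (of_nat n) powr (-s))"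

definition LL :: "nat \<Rightarrow> real" where "LL D = ln (real D)"
definition QQ :: "nat \<Rightarrow> real" where "QQ D = exp (LL D ^ 2)"
definition alpha :: "nat \<Rightarrow> real" where "alpha D = 1 / LL D ^ 2"
definition s0 :: "nat \<Rightarrow> complex" where "s0 D = Complex (1/2) (real D)"

definition Omega1 :: "nat \<Rightarrow> complex set" where
  "Omega1 D = {s. - 2 * sqrt (alpha D) < Re (s - s0 D) \<and> Re (s - s0 D) < 1 \<and>
                  \<bar>Im (s - s0 D)\<bar> < 1 + 20 * LL D}"

definition QSet :: "nat \<Rightarrow> nat set" where
  "QSet D = {q. QQ D < real q \<and> real q < 2 * QQ D \<and> coprime q 6 \<and> squarefree q}"

definition PsiSet :: "nat \<Rightarrow> (nat \<Rightarrow> complex) \<Rightarrow> (nat \<Rightarrow> complex) set" where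
  "PsiSet D chi = (\<Union>q\<in>QSet D. {psi. primitive_char q psi \<and>
                   primitive_char (lcm q D) (\<lambda>n. psi n * chi n)})"

end

(*
  Cover Omega_1 by O(L^3) squares of side 1/(10 L). Around the centre s' of each square,
  Taylor expansion and Cauchy--Schwarz give |F(s)|^2 <= e * sum_k |F_k(s')|^2 / k!, where the
  F_k are Dirichlet polynomials of length N = D^5 whose coefficients are bounded by the divisor
  function. For each modulus q the large sieve bounds the mean square of every F_k over the
  characters mod q by (N + q) sum_n d(n)^2 n^(-2 Re s'), and these divisor sums, added over the
  grid, are O(L^6). Hence the sum over all psi of the squared suprema is O(L^6 Q^2), and at most
  O((log L)^(-2) Q^2) characters can exceed (L^3 log L)^2.
*)
theory Submission
  imports Defs "HOL-Number_Theory.Number_Theory"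
begin

section \<open>Dirichlet characters\<close>

lemma dirichlet_char_add_mult:
  assumes "dirichlet_char q psi"
  shows "psi (n + k * q) = psi n"
proof (induction k)
  case (Suc k)
  have "psi (n + Suc k * q) = psi ((n + k * q) + q)" by (simp add: ac_simps)
  also have "\<dots> = psi (n + k * q)" using assms unfolding dirichlet_char_def by blast
  finally show ?case using Suc by simp
qed simp

lemma dirichlet_char_mod:
  assumes "dirichlet_char q psi"
  shows "psi n = psi (n mod q)"
  using dirichlet_char_add_mult[OF assms, of "n mod q" "n div q"] by simp

lemma dirichlet_char_cong:
  assumes "dirichlet_char q psi" "[a = b] (mod q)"
  shows "psi a = psi b"
  using dirichlet_char_mod[OF assms(1), of a] dirichlet_char_mod[OF assms(1), of b] assms(2)
  unfolding cong_def by simp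

lemma dirichlet_char_1:
  assumes "dirichlet_char q psi"
  shows "psi 1 = 1"
proof -
  have "psi 1 = psi 1 * psi 1" and "psi 1 \<noteq> 0"
    using assms unfolding dirichlet_char_def by (metis mult_1, simp)
  then show ?thesis by (metis mult_cancel_left mult.right_neutral)
qed

lemma dirichlet_char_power:
  assumes "dirichlet_char q psi"
  shows "psi (a ^ k) = psi a ^ k"
  by (induction k) (use assms dirichlet_char_1 in \<open>auto simp: dirichlet_char_def\<close>)

lemma dirichlet_char_power_totient:
  assumes "dirichlet_char q psi" "coprime a q"
  shows "psi a ^ totient q = 1"
  using dirichlet_char_power[OF assms(1)] dirichlet_char_cong[OF assms(1) euler_theorem[OF assms(2)]]
    dirichlet_char_1[OF assms(1)]
  by simp

lemma norm_dirichlet_char_coprime: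
  assumes "dirichlet_char q psi" "coprime a q"
  shows "cmod (psi a) = 1"
proof -
  have "cmod (psi a) ^ totient q = 1"
    using dirichlet_char_power_totient[OF assms] by (metis norm_one norm_power)
  moreover have "totient q > 0" using assms(1) unfolding dirichlet_char_def by simp
  ultimately show ?thesis using power_eq_1_iff[of "cmod (psi a)" "totient q"] by simp
qed

lemma dirichlet_char_not_coprime:
  assumes "dirichlet_char q psi" "\<not> coprime a q"
  shows "psi a = 0"
  using assms unfolding dirichlet_char_def by simp

lemma norm_dirichlet_char_le_1:
  assumes "dirichlet_char q psi"
  shows "cmod (psi a) \<le> 1"
  using norm_dirichlet_char_coprime[OF assms] dirichlet_char_not_coprime[OF assms]
  by (cases "coprime a q") auto

text \<open>A character is determined by its values on \<open>{..<q}\<close>, which are \<open>0\<close> or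
  \<open>totient q\<close>-th roots of unity.\<close>
lemma finite_dirichlet_chars:
  assumes "q \<ge> 1"
  shows "finite {psi. dirichlet_char q psi}"
proof -
  define U where "U = insert 0 {z::complex. z ^ totient q = 1}"
  have "finite U"
    unfolding U_def using assms by (simp add: finite_roots_unity Suc_le_eq)
  have "inj_on (\<lambda>psi. restrict psi {..<q}) {psi. dirichlet_char q psi}"
  proof (rule inj_onI)
    fix f g
    assume f: "f \<in> {psi. dirichlet_char q psi}" and g: "g \<in> {psi. dirichlet_char q psi}"
      and eq: "restrict f {..<q} = restrict g {..<q}"
    show "f = g"
    proof
      fix n
      have "f (n mod q) = g (n mod q)" using fun_cong[OF eq, of "n mod q"] assms by simp
      then show "f n = g n" using dirichlet_char_mod[of q f n] dirichlet_char_mod[of q g n] f g by simp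
    qed
  qed
  moreover have "(\<lambda>psi. restrict psi {..<q}) ` {psi. dirichlet_char q psi} \<subseteq> PiE {..<q} (\<lambda>_. U)"
  proof clarify
    fix psi assume psi: "dirichlet_char q psi"
    have "psi r \<in> U" for r
      using dirichlet_char_power_totient[OF psi, of r] dirichlet_char_not_coprime[OF psi, of r]
      unfolding U_def by (cases "coprime r q") auto
    then show "restrict psi {..<q} \<in> PiE {..<q} (\<lambda>_. U)" by auto
  qed
  ultimately show ?thesis
    using \<open>finite U\<close> finite_PiE finite_imageD finite_subset by (metis finite_lessThan)
qed

lemma bij_betw_mult_mod_lessThan:
  fixes a q :: nat
  assumes "coprime a q" "q \<ge> 1"
  shows "bij_betw (\<lambda>r. a * r mod q) {..<q} {..<q}"
proof -
  have "inj_on (\<lambda>r. a * r mod q) {..<q}"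
  proof (rule inj_onI)
    fix x y assume "x \<in> {..<q}" "y \<in> {..<q}" "a * x mod q = a * y mod q"
    then have "[x = y] (mod q)" using cong_mult_lcancel_nat[OF assms(1)] unfolding cong_def by simp
    then show "x = y" using \<open>x \<in> {..<q}\<close> \<open>y \<in> {..<q}\<close> unfolding cong_def by simp
  qed
  moreover have "(\<lambda>r. a * r mod q) ` {..<q} = {..<q}"
    by (rule endo_inj_surj) (use \<open>inj_on _ {..<q}\<close> assms(2) in auto)
  ultimately show ?thesis by (simp add: bij_betw_def)
qed

text \<open>Multiplying the summation variable by a residue \<open>a\<close> with \<open>f a \<noteq> g a\<close> permutes
  \<open>{..<q}\<close> and scales the sum by \<open>f a * cnj (g a) \<noteq> 1\<close>.\<close>
lemma dirichlet_char_orthogonal: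
  assumes f: "dirichlet_char q f" and g: "dirichlet_char q g" and "f \<noteq> g"
  shows "(\<Sum>r<q. f r * cnj (g r)) = 0"
proof -
  have q: "q \<ge> 1" using f unfolding dirichlet_char_def by simp
  obtain n where "f n \<noteq> g n" using \<open>f \<noteq> g\<close> by blast
  define a where "a = n mod q"
  have fa: "f a \<noteq> g a"
    using \<open>f n \<noteq> g n\<close> dirichlet_char_mod[OF f, of n] dirichlet_char_mod[OF g, of n] a_def by simp
  have cop: "coprime a q"
    using fa dirichlet_char_not_coprime[OF f] dirichlet_char_not_coprime[OF g] by metis
  have gg: "g a * cnj (g a) = 1"
    using norm_dirichlet_char_coprime[OF g cop] complex_norm_square[of "g a"] by simp
  define lam where "lam = f a * cnj (g a)"
  have "lam \<noteq> 1"
  proof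
    assume "lam = 1"
    have "f a = (f a * cnj (g a)) * g a" using gg by (metis mult.assoc mult.commute mult_1)
    then show False using fa \<open>lam = 1\<close> unfolding lam_def by simp
  qed
  define h where "h r = f r * cnj (g r)" for r
  have "h (a * r mod q) = lam * h r" for r
  proof -
    have "h (a * r mod q) = h (a * r)"
      unfolding h_def using dirichlet_char_mod[OF f, of "a * r"] dirichlet_char_mod[OF g, of "a * r"]
      by simp
    also have "\<dots> = lam * h r" unfolding h_def lam_def using f g unfolding dirichlet_char_def by simp
    finally show ?thesis .
  qed
  then have "lam * (\<Sum>r<q. h r) = (\<Sum>r<q. h r)"
    using sum.reindex_bij_betw[OF bij_betw_mult_mod_lessThan[OF cop q], of h]
    by (simp add: sum_distrib_left)
  then have "(lam - 1) * (\<Sum>r<q. h r) = 0" by (simp add: algebra_simps)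
  then show ?thesis using \<open>lam \<noteq> 1\<close> unfolding h_def by simp
qed

section \<open>The large sieve for the characters of one modulus\<close>

lemma sum_orthogonal_combination_inner:
  fixes v :: "'a \<Rightarrow> 'b \<Rightarrow> complex"
  assumes "finite S"
    and orth: "\<And>x y. x \<in> S \<Longrightarrow> y \<in> S \<Longrightarrow> x \<noteq> y \<Longrightarrow> (\<Sum>r\<in>R. v x r * cnj (v y r)) = 0"
    and norm: "\<And>x. x \<in> S \<Longrightarrow> (\<Sum>r\<in>R. v x r * cnj (v x r)) = c"
  shows "(\<Sum>r\<in>R. (\<Sum>x\<in>S. \<beta> x * v x r) * cnj (\<Sum>y\<in>S. \<gamma> y * v y r))
         = c * (\<Sum>x\<in>S. \<beta> x * cnj (\<gamma> x))"
proof -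
  have "(\<Sum>r\<in>R. (\<Sum>x\<in>S. \<beta> x * v x r) * cnj (\<Sum>y\<in>S. \<gamma> y * v y r))
      = (\<Sum>r\<in>R. \<Sum>y\<in>S. \<Sum>x\<in>S. \<beta> x * cnj (\<gamma> y) * (v x r * cnj (v y r)))"
    by (simp only: cnj_sum complex_cnj_mult sum_distrib_left sum_distrib_right ac_simps)
  also have "\<dots> = (\<Sum>y\<in>S. \<Sum>x\<in>S. \<beta> x * cnj (\<gamma> y) * (\<Sum>r\<in>R. v x r * cnj (v y r)))"
    by (simp only: sum_distrib_left sum.swap[of _ R])
  also have "\<dots> = (\<Sum>y\<in>S. \<beta> y * cnj (\<gamma> y) * c)"
  proof (rule sum.cong[OF refl])
    fix y assume "y \<in> S"
    then show "(\<Sum>x\<in>S. \<beta> x * cnj (\<gamma> y) * (\<Sum>r\<in>R. v x r * cnj (v y r))) = \<beta> y * cnj (\<gamma> y) * c"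
      using \<open>finite S\<close> orth norm by (simp add: sum.remove[of S y] sum.neutral)
  qed
  finally show ?thesis by (simp add: sum_distrib_left mult.commute)
qed

text \<open>Expand \<open>0 \<le> \<parallel>A - w\<parallel>\<^sup>2\<close> for the orthogonal projection \<open>w\<close> of \<open>A\<close>.\<close>
lemma bessel_inequality:
  fixes v :: "'a \<Rightarrow> 'b \<Rightarrow> complex" and A :: "'b \<Rightarrow> complex"
  assumes "finite S" "finite R"
    and orth: "\<And>x y. x \<in> S \<Longrightarrow> y \<in> S \<Longrightarrow> x \<noteq> y \<Longrightarrow> (\<Sum>r\<in>R. v x r * cnj (v y r)) = 0"
    and norm: "\<And>x. x \<in> S \<Longrightarrow> (\<Sum>r\<in>R. v x r * cnj (v x r)) = of_real c"
    and "c > 0"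
  shows "(\<Sum>x\<in>S. (cmod (\<Sum>r\<in>R. A r * cnj (v x r)))\<^sup>2) \<le> c * (\<Sum>r\<in>R. (cmod (A r))\<^sup>2)"
proof -
  define b where "b x = (\<Sum>r\<in>R. A r * cnj (v x r))" for x
  define w where "w r = (\<Sum>x\<in>S. b x / of_real c * v x r)" for r
  define P where "P = (\<Sum>x\<in>S. (cmod (b x))\<^sup>2)"
  have bb: "(\<Sum>x\<in>S. b x * cnj (b x)) = of_real P"
    unfolding P_def by (simp only: of_real_sum complex_norm_square)
  have Aw: "(\<Sum>r\<in>R. A r * cnj (w r)) = of_real (P / c)"
  proof -
    have "(\<Sum>r\<in>R. A r * cnj (w r)) = (\<Sum>r\<in>R. \<Sum>x\<in>S. cnj (b x) / of_real c * (A r * cnj (v x r)))"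
      unfolding w_def by (simp add: sum_distrib_left ac_simps)
    also have "\<dots> = (\<Sum>x\<in>S. cnj (b x) / of_real c * b x)"
      unfolding b_def by (simp only: sum.swap[of _ R] sum_distrib_left)
    also have "\<dots> = (\<Sum>x\<in>S. b x * cnj (b x)) / of_real c"
      by (simp add: sum_divide_distrib ac_simps)
    finally show ?thesis using bb by simp
  qed
  have ww: "(\<Sum>r\<in>R. w r * cnj (w r)) = of_real (P / c)"
  proof -
    have "(\<Sum>r\<in>R. w r * cnj (w r)) = of_real c * (\<Sum>x\<in>S. b x / of_real c * cnj (b x / of_real c))"
      unfolding w_def by (rule sum_orthogonal_combination_inner[OF \<open>finite S\<close> orth norm])
    also have "\<dots> = (\<Sum>x\<in>S. b x * cnj (b x)) / of_real c"
      using \<open>c > 0\<close> by (simp add: sum_distrib_left sum_divide_distrib)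
    finally show ?thesis using bb by simp
  qed
  have wA: "(\<Sum>r\<in>R. w r * cnj (A r)) = of_real (P / c)"
    using arg_cong[OF Aw, of cnj] by (simp add: mult.commute)
  have "of_real (\<Sum>r\<in>R. (cmod (A r - w r))\<^sup>2) = (\<Sum>r\<in>R. (A r - w r) * cnj (A r - w r))"
    by (simp only: of_real_sum complex_norm_square)
  also have "\<dots> = (\<Sum>r\<in>R. A r * cnj (A r)) - (\<Sum>r\<in>R. A r * cnj (w r))
        - (\<Sum>r\<in>R. w r * cnj (A r)) + (\<Sum>r\<in>R. w r * cnj (w r))"
    by (simp add: algebra_simps sum.distrib sum_subtractf)
  also have "\<dots> = of_real ((\<Sum>r\<in>R. (cmod (A r))\<^sup>2) - P / c)"
    unfolding Aw ww wA of_real_diff of_real_sum complex_norm_square by simp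
  finally have "(\<Sum>r\<in>R. (cmod (A r - w r))\<^sup>2) = (\<Sum>r\<in>R. (cmod (A r))\<^sup>2) - P / c"
    using of_real_eq_iff by blast
  moreover have "(\<Sum>r\<in>R. (cmod (A r - w r))\<^sup>2) \<ge> 0" by (simp add: sum_nonneg)
  ultimately have "P / c \<le> (\<Sum>r\<in>R. (cmod (A r))\<^sup>2)" by linarith
  then show ?thesis using \<open>c > 0\<close> unfolding P_def b_def by (simp add: field_simps)
qed

lemma norm_sum_squared_le_card:
  fixes a :: "'a \<Rightarrow> complex"
  shows "(cmod (\<Sum>n\<in>B. a n))\<^sup>2 \<le> real (card B) * (\<Sum>n\<in>B. (cmod (a n))\<^sup>2)"
proof -
  have "(cmod (\<Sum>n\<in>B. a n))\<^sup>2 \<le> (\<Sum>n\<in>B. 1 * cmod (a n))\<^sup>2"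
    by (simp add: norm_sum power_mono)
  also have "\<dots> \<le> (\<Sum>n\<in>B. 1\<^sup>2) * (\<Sum>n\<in>B. (cmod (a n))\<^sup>2)" by (rule Cauchy_Schwarz_ineq_sum)
  finally show ?thesis by simp
qed

lemma card_residue_class_le:
  assumes "q \<ge> 1"
  shows "card {n \<in> {1..N}. n mod q = r} \<le> N div q + 1"
proof -
  have "inj_on (\<lambda>n. n div q) {n \<in> {1..N}. n mod q = r}"
    by (rule inj_onI) (metis (mono_tags, lifting) div_mod_decomp mem_Collect_eq)
  moreover have "(\<lambda>n. n div q) ` {n \<in> {1..N}. n mod q = r} \<subseteq> {0..N div q}"
    by (auto intro: div_le_mono)
  ultimately have "card {n \<in> {1..N}. n mod q = r} \<le> card {0..N div q}"
    by (metis card_image card_mono finite_atLeastAtMost)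
  then show ?thesis by simp
qed

lemma sum_by_residue_classes:
  fixes q N :: nat
  assumes "q \<ge> 1"
  shows "(\<Sum>n=1..N. f n) = (\<Sum>r<q. \<Sum>n\<in>{n \<in> {1..N}. n mod q = r}. f n)"
  by (rule sum.group[symmetric]) (use assms in auto)

lemma sum_dirichlet_char_by_residue_classes:
  assumes "dirichlet_char q psi"
  shows "(\<Sum>n=1..N. a n * psi n) = (\<Sum>r<q. (\<Sum>n\<in>{n \<in> {1..N}. n mod q = r}. a n) * psi r)"
proof -
  have "q \<ge> 1" using assms unfolding dirichlet_char_def by simp
  then have "(\<Sum>n=1..N. a n * psi n) = (\<Sum>r<q. \<Sum>n\<in>{n \<in> {1..N}. n mod q = r}. a n * psi r)"
    unfolding sum_by_residue_classes[OF \<open>q \<ge> 1\<close>]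
    by (intro sum.cong refl) (use dirichlet_char_mod[OF assms] in auto)
  then show ?thesis by (simp add: sum_distrib_right)
qed

lemma sum_dirichlet_char_mult_cnj:
  assumes "dirichlet_char q psi"
  shows "(\<Sum>r<q. psi r * cnj (psi r)) = of_nat (card {r \<in> {..<q}. coprime r q})"
proof -
  have "(\<Sum>r<q. psi r * cnj (psi r)) = (\<Sum>r<q. if coprime r q then 1 else 0)"
    using norm_dirichlet_char_coprime[OF assms] dirichlet_char_not_coprime[OF assms]
    by (intro sum.cong refl) (auto simp: complex_norm_square[symmetric])
  then show ?thesis by (simp add: sum.If_cases Int_def)
qed

lemma sum_residue_class_sums_sq_le:
  fixes a :: "nat \<Rightarrow> complex"
  assumes "q \<ge> 1"
  shows "(\<Sum>r<q. (cmod (\<Sum>n\<in>{n \<in> {1..N}. n mod q = r}. a n))\<^sup>2)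
         \<le> real (N div q + 1) * (\<Sum>n=1..N. (cmod (a n))\<^sup>2)"
proof -
  have "(\<Sum>r<q. (cmod (\<Sum>n\<in>{n \<in> {1..N}. n mod q = r}. a n))\<^sup>2)
      \<le> (\<Sum>r<q. real (N div q + 1) * (\<Sum>n\<in>{n \<in> {1..N}. n mod q = r}. (cmod (a n))\<^sup>2))"
  proof (rule sum_mono)
    fix r
    show "(cmod (\<Sum>n\<in>{n \<in> {1..N}. n mod q = r}. a n))\<^sup>2
        \<le> real (N div q + 1) * (\<Sum>n\<in>{n \<in> {1..N}. n mod q = r}. (cmod (a n))\<^sup>2)"
      using card_residue_class_le[OF assms, of N r]
      by (intro order_trans[OF norm_sum_squared_le_card] mult_right_mono sum_nonneg) auto
  qed
  also have "\<dots> = real (N div q + 1) * (\<Sum>n=1..N. (cmod (a n))\<^sup>2)"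
    by (simp only: sum_by_residue_classes[OF assms] sum_distrib_left)
  finally show ?thesis .
qed

text \<open>Group \<open>n\<close> by its residue modulo \<open>q\<close>, apply Bessel's inequality to the orthogonal characters,
  and Cauchy--Schwarz within each residue class.\<close>
lemma large_sieve_dirichlet_chars:
  fixes a :: "nat \<Rightarrow> complex"
  assumes q: "q \<ge> 1" and S: "S \<subseteq> {psi. dirichlet_char q psi}"
  shows "(\<Sum>psi\<in>S. (cmod (\<Sum>n=1..N. a n * psi n))\<^sup>2) \<le> real (N + q) * (\<Sum>n=1..N. (cmod (a n))\<^sup>2)"
proof -
  define A where "A r = (\<Sum>n\<in>{n \<in> {1..N}. n mod q = r}. a n)" for r
  define c where "c = real (card {r \<in> {..<q}. coprime r q})"
  have "finite S" using finite_dirichlet_chars[OF q] S finite_subset by blast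
  have "c > 0"
  proof -
    have "(if q = 1 then 0 else 1) \<in> {r \<in> {..<q}. coprime r q}" using q by auto
    then show ?thesis unfolding c_def by (auto simp: card_gt_0_iff)
  qed
  have "c \<le> real q" unfolding c_def using card_mono[of "{..<q}" "{r\<in>{..<q}. coprime r q}"] by auto
  have "(\<Sum>psi\<in>S. (cmod (\<Sum>n=1..N. a n * psi n))\<^sup>2) = (\<Sum>psi\<in>S. (cmod (\<Sum>r<q. A r * cnj (cnj (psi r))))\<^sup>2)"
    using S sum_dirichlet_char_by_residue_classes unfolding A_def by (intro sum.cong) auto
  also have "\<dots> \<le> c * (\<Sum>r<q. (cmod (A r))\<^sup>2)"
  proof (rule bessel_inequality[OF \<open>finite S\<close> finite_lessThan])
    fix x y assume "x \<in> S" "y \<in> S" "x \<noteq> y"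
    then have "(\<Sum>r<q. x r * cnj (y r)) = 0" using S by (intro dirichlet_char_orthogonal) auto
    then have "cnj (\<Sum>r<q. x r * cnj (y r)) = 0" by simp
    then show "(\<Sum>r<q. cnj (x r) * cnj (cnj (y r))) = 0" by (simp add: mult.commute)
  next
    fix x assume "x \<in> S"
    then have "(\<Sum>r<q. x r * cnj (x r)) = of_real c"
      using S sum_dirichlet_char_mult_cnj unfolding c_def by auto
    then show "(\<Sum>r<q. cnj (x r) * cnj (cnj (x r))) = of_real c" by (simp add: mult.commute)
  qed (rule \<open>c > 0\<close>)
  also have "\<dots> \<le> real q * (real (N div q + 1) * (\<Sum>n=1..N. (cmod (a n))\<^sup>2))"
    using \<open>c \<le> real q\<close> sum_residue_class_sums_sq_le[OF q, of a N] unfolding A_def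
    by (intro mult_mono sum_nonneg) auto
  also have "\<dots> \<le> real (N + q) * (\<Sum>n=1..N. (cmod (a n))\<^sup>2)"
  proof -
    have "q * (N div q + 1) \<le> N + q" by (simp add: algebra_simps)
    then have "real q * real (N div q + 1) \<le> real (N + q)" by (metis of_nat_le_iff of_nat_mult)
    then show ?thesis by (simp add: mult.assoc[symmetric] mult_right_mono sum_nonneg)
  qed
  finally show ?thesis .
qed

section \<open>Sums of the divisor function and of powers\<close>

definition divisor_count :: "nat \<Rightarrow> nat" where
  "divisor_count n = card {d. d dvd n \<and> d > 0}"

lemma norm_nu_le_divisor_count:
  assumes "dirichlet_char q chi"
  shows "cmod (nu chi n) \<le> real (divisor_count n)"
proof -
  have "cmod (nu chi n) \<le> (\<Sum>d | d dvd n \<and> d > 0. cmod (chi d))" unfolding nu_def by (rule norm_sum)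
  also have "\<dots> \<le> (\<Sum>d | d dvd n \<and> d > 0. 1)"
    by (rule sum_mono) (rule norm_dirichlet_char_le_1[OF assms])
  finally show ?thesis unfolding divisor_count_def by simp
qed

lemma abs_mu_le_1: "\<bar>mu n\<bar> \<le> 1"
  unfolding mu_def by (simp add: power_abs)

lemma norm_upsilon_le_divisor_count:
  assumes "dirichlet_char q chi"
  shows "cmod (upsilon chi n) \<le> real (divisor_count n)"
proof -
  have "cmod (upsilon chi n) \<le> (\<Sum>d | d dvd n \<and> d > 0. cmod (of_int (mu (n div d)) * of_int (mu d) * chi d))"
    unfolding upsilon_def by (rule norm_sum)
  also have "\<dots> \<le> (\<Sum>d | d dvd n \<and> d > 0. 1)"
  proof (rule sum_mono)
    fix d
    have "cmod (of_int (mu (n div d)) * of_int (mu d) * chi d)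
        = \<bar>real_of_int (mu (n div d))\<bar> * \<bar>real_of_int (mu d)\<bar> * cmod (chi d)"
      by (simp add: norm_mult)
    also have "\<dots> \<le> 1 * 1 * 1"
      using abs_mu_le_1[of "n div d"] abs_mu_le_1[of d] norm_dirichlet_char_le_1[OF assms, of d]
      by (intro mult_mono) auto
    finally show "cmod (of_int (mu (n div d)) * of_int (mu d) * chi d) \<le> 1" by simp
  qed
  finally show ?thesis unfolding divisor_count_def by simp
qed

lemma gcd_lcm_factorization:
  fixes n b c :: nat
  assumes "b dvd n" "c dvd n"
  shows "gcd b c * (b div gcd b c) * (c div gcd b c) * (n div lcm b c) = n"
proof -
  have "gcd b c * (b div gcd b c) = b" by simp
  moreover have "b * (c div gcd b c) = lcm b c" by (simp add: lcm_nat_def div_mult_swap)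
  moreover have "lcm b c * (n div lcm b c) = n" using assms by (simp add: lcm_least)
  ultimately show ?thesis by (metis mult.assoc)
qed

lemma sum_power4_eq_sum_product:
  fixes f :: "'a \<Rightarrow> real"
  shows "(\<Sum>(w, x, y, z)\<in>A \<times> A \<times> A \<times> A. f w * f x * f y * f z) = sum f A ^ 4"
proof -
  have "sum f A ^ 4 = sum f A * (sum f A * (sum f A * sum f A))" by (simp add: power4_eq_xxxx)
  also have "\<dots> = (\<Sum>w\<in>A. f w * (\<Sum>x\<in>A. f x * (\<Sum>y\<in>A. f y * (\<Sum>z\<in>A. f z))))"
    by (simp add: sum_distrib_right)
  also have "\<dots> = (\<Sum>w\<in>A. \<Sum>x\<in>A. \<Sum>y\<in>A. \<Sum>z\<in>A. f w * f x * f y * f z)"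
    by (simp add: sum_distrib_left mult.assoc)
  finally show ?thesis by (simp add: sum.cartesian_product)
qed

lemma inj_on_gcd_lcm_split:
  "inj_on (\<lambda>(n::nat, b::nat, c::nat). (gcd b c, b div gcd b c, c div gcd b c, n div lcm b c))
     {(n, b, c). b dvd n \<and> c dvd n}"
proof (rule inj_onI)
  fix t t' :: "nat \<times> nat \<times> nat"
  assume "t \<in> {(n, b, c). b dvd n \<and> c dvd n}" "t' \<in> {(n, b, c). b dvd n \<and> c dvd n}"
    and e: "(\<lambda>(n, b, c). (gcd b c, b div gcd b c, c div gcd b c, n div lcm b c)) t
          = (\<lambda>(n, b, c). (gcd b c, b div gcd b c, c div gcd b c, n div lcm b c)) t'"
  obtain n b c n' b' c' where t: "t = (n, b, c)" and t': "t' = (n', b', c')"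
    by (metis prod_cases3)
  have dvd: "b dvd n" "c dvd n" "b' dvd n'" "c' dvd n'"
    using \<open>t \<in> _\<close> \<open>t' \<in> _\<close> unfolding t t' by simp_all
  have "gcd b c = gcd b' c' \<and> b div gcd b c = b' div gcd b' c' \<and> c div gcd b c = c' div gcd b' c'
      \<and> n div lcm b c = n' div lcm b' c'"
    using e unfolding t t' prod.case prod.inject .
  then have e1: "gcd b c = gcd b' c'" "b div gcd b c = b' div gcd b' c'"
    "c div gcd b c = c' div gcd b' c'" "n div lcm b c = n' div lcm b' c'"
    by blast+
  have "b = gcd b c * (b div gcd b c)" by (rule dvd_mult_div_cancel[OF gcd_dvd1, symmetric])
  also have "\<dots> = gcd b' c' * (b' div gcd b' c')" by (rule arg_cong2[where f = "(*)", OF e1(1,2)])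
  finally have "b = b'" by simp
  have "c = gcd b c * (c div gcd b c)" by (rule dvd_mult_div_cancel[OF gcd_dvd2, symmetric])
  also have "\<dots> = gcd b' c' * (c' div gcd b' c')" by (rule arg_cong2[where f = "(*)", OF e1(1,3)])
  finally have "c = c'" by simp
  moreover note \<open>b = b'\<close>
  moreover have "n = n'"
    using gcd_lcm_factorization[of b n c] gcd_lcm_factorization[of b' n' c'] dvd e1 by simp
  ultimately show "t = t'" using t t' by simp
qed

lemma gcd_lcm_split_mem:
  fixes n b c :: nat
  assumes n: "n \<in> {1..N}" and "b dvd n" "c dvd n"
  shows "(gcd b c, b div gcd b c, c div gcd b c, n div lcm b c) \<in> {1..N} \<times> {1..N} \<times> {1..N} \<times> {1..N}"
proof -
  have pos: "b > 0" "c > 0" "lcm b c dvd n" using assms by (auto intro: Nat.gr0I lcm_least)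
  have "b \<le> N" "c \<le> N" using assms by (auto dest: dvd_imp_le)
  then have "gcd b c \<le> N" "b div gcd b c \<le> N" "c div gcd b c \<le> N" "n div lcm b c \<le> N"
    using pos n by (auto intro: le_trans[OF gcd_le1_nat] le_trans[OF div_le_dividend])
  moreover have "0 < gcd b c" "0 < b div gcd b c" "0 < c div gcd b c" "0 < n div lcm b c"
    using pos n by (auto simp: div_greater_zero_iff dvd_imp_le lcm_pos_nat)
  ultimately show ?thesis by (auto simp: Suc_le_eq)
qed

text \<open>The triples \<open>(n, b, c)\<close> with \<open>b, c\<close> dividing \<open>n\<close> correspond injectively to the quadruples
  \<open>(gcd b c, b / gcd b c, c / gcd b c, n / lcm b c)\<close>, whose product is \<open>n\<close>.\<close>
lemma sum_divisor_count_sq_powr_le: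
  fixes a :: real
  shows "(\<Sum>n=1..N. real (divisor_count n)^2 * real n powr (-a)) \<le> (\<Sum>m=1..N. real m powr (-a)) ^ 4"
proof -
  define Dv where "Dv n = {d::nat. d dvd n \<and> d > 0}" for n
  define T where "T = Sigma {1..N} (\<lambda>n. Dv n \<times> Dv n)"
  define f where "f m = real m powr (-a)" for m
  define phi where
    "phi = (\<lambda>(n::nat, b::nat, c::nat). (gcd b c, b div gcd b c, c div gcd b c, n div lcm b c))"
  define h where "h = (\<lambda>(w, x, y, z). f w * f x * f y * f z)"
  have finite_Dv: "finite (Dv n)" if "n > 0" for n
    unfolding Dv_def using that by (auto intro: finite_subset[of _ "{..n}"] dest: dvd_imp_le)
  have "(\<Sum>n=1..N. real (divisor_count n)^2 * real n powr (-a)) = (\<Sum>n=1..N. \<Sum>t\<in>Dv n \<times> Dv n. f n)"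
    by (intro sum.cong refl)
      (simp add: f_def Dv_def divisor_count_def card_cartesian_product power2_eq_square)
  also have "\<dots> = (\<Sum>(n, t)\<in>T. f n)"
    unfolding T_def by (rule sum.Sigma) (auto intro!: finite_cartesian_product finite_Dv)
  also have "\<dots> = (\<Sum>t\<in>T. h (phi t))"
  proof (rule sum.cong[OF refl], clarify)
    fix n b c assume "(n, b, c) \<in> T"
    then have "b dvd n" "c dvd n" unfolding T_def Dv_def by auto
    then show "f n = h (phi (n, b, c))"
      using gcd_lcm_factorization[of b n c]
      unfolding f_def h_def phi_def by (simp add: powr_mult[symmetric] flip: of_nat_mult)
  qed
  also have "\<dots> = (\<Sum>s\<in>phi ` T. h s)"
  proof -
    have "T \<subseteq> {(n, b, c). b dvd n \<and> c dvd n}" unfolding T_def Dv_def by auto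
    then have "inj_on phi T" unfolding phi_def by (rule inj_on_subset[OF inj_on_gcd_lcm_split])
    then show ?thesis by (simp add: sum.reindex)
  qed
  also have "\<dots> \<le> (\<Sum>s\<in>{1..N} \<times> {1..N} \<times> {1..N} \<times> {1..N}. h s)"
    using gcd_lcm_split_mem unfolding T_def Dv_def phi_def
    by (intro sum_mono2) (auto simp: h_def f_def)
  also have "\<dots> = (\<Sum>m=1..N. real m powr (-a)) ^ 4"
    unfolding h_def f_def by (rule sum_power4_eq_sum_product)
  finally show ?thesis .
qed

lemma powr_minus_one_plus_le_diff:
  fixes x v :: real
  assumes x: "x \<ge> 2" and v: "v > 0"
  shows "x powr (-(1+v)) \<le> ((x-1) powr (-v) - x powr (-v)) / v"
proof -
  have "ln ((x-1)/x) \<le> (x-1)/x - 1" using x by (intro ln_le_minus_one) simp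
  then have l: "ln (x-1) \<le> ln x - 1/x" using x by (simp add: ln_div field_simps)
  have "x powr (-v) * (1 + v/x) \<le> x powr (-v) * exp (v/x)"
    by (intro mult_left_mono exp_ge_add_one_self) auto
  also have "\<dots> = exp (-v * ln x + v/x)" using x by (simp add: powr_def mult_exp_exp algebra_simps)
  also have "\<dots> \<le> exp (-v * ln (x-1))"
    using mult_left_mono[OF l, of v] v by (simp add: algebra_simps)
  also have "\<dots> = (x-1) powr (-v)" using x by (simp add: powr_def)
  finally have "v * (x powr (-v) / x) \<le> (x-1) powr (-v) - x powr (-v)" by (simp add: algebra_simps)
  moreover have "x powr (-(1+v)) = x powr (-v) / x"
  proof -
    have "x powr (-(1+v)) = x powr (-v + -1)" by (rule arg_cong[of _ _ "\<lambda>e. x powr e"]) simp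
    also have "\<dots> = x powr (-v) / x" using x by (simp only: powr_add powr_neg_one) simp
    finally show ?thesis .
  qed
  ultimately show ?thesis using v by (simp add: field_simps)
qed

lemma sum_powr_minus_one_plus_le:
  fixes v :: real
  assumes v: "v > 0"
  shows "(\<Sum>m=1..N. real m powr (-(1+v))) \<le> 1 + 1 / v"
proof (cases "N \<ge> 1")
  case True
  have "(\<Sum>m=1..N. real m powr (-(1+v))) \<le> 1 + (1 - real N powr (-v)) / v"
    using True
  proof (induction N rule: dec_induct)
    case (step N)
    have "(\<Sum>m=1..Suc N. real m powr (-(1+v)))
        \<le> 1 + (1 - real N powr (-v)) / v + (real N powr (-v) - real (Suc N) powr (-v)) / v"
      using step.IH powr_minus_one_plus_le_diff[of "real (Suc N)" v] v step.hyps by simp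
    also have "\<dots> = 1 + (1 - real (Suc N) powr (-v)) / v" using v by (simp add: field_simps)
    finally show ?case .
  qed simp
  also have "\<dots> \<le> 1 + 1 / v" using v by (simp add: divide_right_mono)
  finally show ?thesis .
qed (use v in simp)

text \<open>For \<open>v < 1 / ln N\<close> compare with the exponent \<open>1 + 1 / ln N\<close>: the quotient of the terms is at
  most \<open>N powr (1 / ln N - v) \<le> exp 21\<close>.\<close>
lemma sum_powr_minus_one_plus_le_exp_21:
  fixes v :: real
  assumes N: "N \<ge> 3" and v: "v \<ge> -20 / ln (real N)"
  shows "(\<Sum>m=1..N. real m powr (-(1+v))) \<le> exp 21 * (1 + 1 / max v (1 / ln (real N)))"
proof -
  define Lp where "Lp = ln (real N)"
  have "exp 1 \<le> real N" using N exp_le by linarith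
  then have Lp1: "Lp \<ge> 1" unfolding Lp_def using ln_mono[of "exp 1" "real N"] by simp
  show ?thesis
  proof (cases "v \<ge> 1/Lp")
    case True
    then have "v > 0" using Lp1 by (smt (verit) divide_pos_pos)
    then have "(\<Sum>m=1..N. real m powr (-(1+v))) \<le> 1 + 1/v" by (rule sum_powr_minus_one_plus_le)
    also have "\<dots> \<le> exp 21 * (1 + 1/v)"
      using \<open>v > 0\<close> mult_right_mono[of 1 "exp 21" "1 + 1/v"] by simp
    finally show ?thesis using True unfolding Lp_def by (simp add: max_def)
  next
    case False
    have "real N powr (1/Lp - v) = exp (1 - v * Lp)"
      using N Lp1 unfolding Lp_def by (simp add: powr_def field_simps)
    also have "\<dots> \<le> exp 21" using v Lp1 unfolding Lp_def[symmetric] by (simp add: field_simps)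
    finally have N_powr: "real N powr (1/Lp - v) \<le> exp 21" .
    have termwise: "real m powr (-(1+v)) \<le> exp 21 * real m powr (-(1+1/Lp))" if m: "m \<in> {1..N}" for m
    proof -
      have "real m powr (-(1+v)) = real m powr (-(1+1/Lp)) * real m powr (1/Lp - v)"
        by (simp add: powr_add[symmetric])
      also have "\<dots> \<le> real m powr (-(1+1/Lp)) * real N powr (1/Lp - v)"
        using m False by (intro mult_left_mono powr_mono2) auto
      also have "\<dots> \<le> real m powr (-(1+1/Lp)) * exp 21"
        using N_powr by (intro mult_left_mono) auto
      finally show ?thesis by (simp add: mult.commute)
    qed
    have "(\<Sum>m=1..N. real m powr (-(1+v))) \<le> (\<Sum>m=1..N. exp 21 * real m powr (-(1+1/Lp)))"
      by (rule sum_mono) (rule termwise)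
    also have "\<dots> = exp 21 * (\<Sum>m=1..N. real m powr (-(1+1/Lp)))" by (simp only: sum_distrib_left)
    also have "\<dots> \<le> exp 21 * (1 + 1/(1/Lp))"
      using sum_powr_minus_one_plus_le[of "1/Lp" N] Lp1 by (intro mult_left_mono) auto
    finally show ?thesis using False unfolding Lp_def by (simp add: max_def)
  qed
qed

lemma sum_inverse_squares_le: "(\<Sum>i<n. 1 / (real i + 1)^2) \<le> 2 - 1 / real (max n 1)"
proof (induction n)
  case (Suc n)
  show ?case
  proof (cases "n = 0")
    case False
    then have n: "real n \<ge> 1" by simp
    have "1 / (real n + 1)^2 \<le> 1 / (real n * (real n + 1))"
      using n by (intro divide_left_mono) (auto simp: power2_eq_square)
    also have "\<dots> = 1 / real n - 1 / (1 + real n)" using n by (simp add: field_simps)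
    finally show ?thesis using Suc.IH False by simp
  qed simp
qed simp

lemma one_plus_power4_le:
  fixes y :: real
  assumes "y \<ge> 0"
  shows "(1 + y)^4 \<le> 16 * (1 + y^4)"
proof (cases "y \<le> 1")
  case True
  then have "(1 + y)^4 \<le> 2^4" using assms by (intro power_mono) auto
  then have "(1 + y)^4 \<le> 16" by simp
  moreover have "16 \<le> 16 * (1 + y^4)" using assms by simp
  ultimately show ?thesis by linarith
next
  case False
  then have "(1 + y)^4 \<le> (2 * y)^4" using assms by (intro power_mono) auto
  then show ?thesis by simp
qed

text \<open>The exponent is twice the real part of the \<open>i\<close>-th column of the grid used below. Comparing
  with \<open>(\<Sum>m\<le>N. m powr (-(1+v)))^4\<close>, \<open>v = (i - 20) / ln N\<close>, the column contributes
  \<open>O(min(ln N, 1/v)^4) = O((ln N / (i + 1))^4)\<close>.\<close>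
lemma sum_divisor_count_sq_powr_line_le:
  assumes N: "N \<ge> 3"
  defines "Lp \<equiv> ln (real N)"
  shows "(\<Sum>n=1..N. real (divisor_count n)^2 * real n powr (-(1 + (real i - 20)/Lp)))
         \<le> 16 * exp 84 * (1 + 22^4 * Lp^4 * (1 / (real i + 1)^2))"
proof -
  have Lp0: "Lp > 0" using N unfolding Lp_def by simp
  define v where "v = (real i - 20)/Lp"
  define y where "y = 1 / max v (1/Lp)"
  have "v \<ge> -20/Lp" unfolding v_def using Lp0 by (simp add: field_simps)
  have "max v (1/Lp) \<ge> (real i + 1) / (22 * Lp)"
    using Lp0 unfolding v_def by (cases "i \<ge> 21") (auto simp: field_simps max_def)
  moreover have "(real i + 1) / (22 * Lp) > 0" using Lp0 by simp
  ultimately have y0: "y \<ge> 0" and yle: "y \<le> 22 * Lp / (real i + 1)"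
    unfolding y_def using le_imp_inverse_le by (force simp: inverse_eq_divide)+
  define H where "H = (\<Sum>m=1..N. real m powr (-(1+v)))"
  have "H \<ge> 0" unfolding H_def by (simp add: sum_nonneg)
  have "(\<Sum>n=1..N. real (divisor_count n)^2 * real n powr (-(1 + (real i - 20)/Lp))) \<le> H ^ 4"
    unfolding H_def v_def by (rule sum_divisor_count_sq_powr_le)
  also have "\<dots> \<le> (exp 21 * (1 + y)) ^ 4"
    using \<open>H \<ge> 0\<close> sum_powr_minus_one_plus_le_exp_21[OF N \<open>v \<ge> -20/Lp\<close>[unfolded Lp_def]]
    unfolding H_def y_def Lp_def by (intro power_mono) auto
  also have "\<dots> = exp 84 * (1 + y)^4" by (simp add: power_mult_distrib flip: exp_of_nat_mult)
  also have "\<dots> \<le> exp 84 * (16 * (1 + y^4))" using one_plus_power4_le[OF y0] by simp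
  also have "y^4 \<le> 22^4 * Lp^4 * (1 / (real i + 1)^2)"
  proof -
    have "y^4 \<le> (22 * Lp / (real i + 1))^4" using y0 yle by (intro power_mono) auto
    also have "\<dots> = 22^4 * Lp^4 * (1 / (real i + 1)^4)" by (simp add: power_divide power_mult_distrib)
    also have "\<dots> \<le> 22^4 * Lp^4 * (1 / (real i + 1)^2)"
      by (intro mult_left_mono divide_left_mono power_increasing) auto
    finally show ?thesis .
  qed
  finally show ?thesis by (simp add: algebra_simps)
qed

lemma sum_divisor_count_sq_powr_grid_le:
  assumes N: "N \<ge> 3"
  defines "Lp \<equiv> ln (real N)"
  shows "(\<Sum>i=0..I. \<Sum>n=1..N. real (divisor_count n)^2 * real n powr (-(1 + (real i - 20)/Lp)))
         \<le> 16 * exp 84 * (real (I+1) + 2 * 22^4 * Lp^4)"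
proof -
  have "(\<Sum>i=0..I. 1 / (real i + 1)^2) \<le> 2 - 1 / (1 + real I)"
    using sum_inverse_squares_le[of "I+1"] by (simp add: atLeast0AtMost lessThan_Suc_atMost)
  then have "(\<Sum>i=0..I. 1 / (real i + 1)^2) \<le> 2"
    using divide_nonneg_nonneg[of 1 "1 + real I"] by linarith
  have "(\<Sum>i=0..I. \<Sum>n=1..N. real (divisor_count n)^2 * real n powr (-(1 + (real i - 20)/Lp)))
      \<le> (\<Sum>i=0..I. 16 * exp 84 * (1 + 22^4 * Lp^4 * (1 / (real i + 1)^2)))"
    unfolding Lp_def by (rule sum_mono) (rule sum_divisor_count_sq_powr_line_le[OF N])
  also have "\<dots> = 16 * exp 84 * (real (I+1) + 22^4 * Lp^4 * (\<Sum>i=0..I. 1 / (real i + 1)^2))"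
    by (simp only: sum_distrib_left[symmetric] sum.distrib) simp
  also have "\<dots> \<le> 16 * exp 84 * (real (I+1) + 22^4 * Lp^4 * 2)"
    using \<open>(\<Sum>i=0..I. 1 / (real i + 1)^2) \<le> 2\<close> by (intro mult_left_mono add_left_mono) auto
  finally show ?thesis by simp
qed

section \<open>Taylor expansion of Dirichlet polynomials\<close>

text \<open>Up to the factor \<open>(- ln N)^k\<close>, \<open>taylor_coeff c N s k\<close> is the \<open>k\<close>-th derivative at \<open>s\<close> of the
  Dirichlet polynomial \<open>\<Sum>n\<le>N. c n * n powr (-s)\<close>; the normalisation makes every weight
  \<open>(ln n / ln N)^k\<close> lie in \<open>[0, 1]\<close>.\<close>
definition taylor_coeff :: "(nat \<Rightarrow> complex) \<Rightarrow> nat \<Rightarrow> complex \<Rightarrow> nat \<Rightarrow> complex" where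
  "taylor_coeff c N s k =
     (\<Sum>n=1..N. c n * of_real ((ln (real n) / ln (real N))^k) * of_nat n powr (-s))"

definition taylor_mass :: "(nat \<Rightarrow> complex) \<Rightarrow> nat \<Rightarrow> complex \<Rightarrow> real" where
  "taylor_mass c N s = (\<Sum>k. (cmod (taylor_coeff c N s k))^2 / fact k)"

lemma inverse_fact_sums: "(\<lambda>k. 1 / fact k :: real) sums exp 1"
  using exp_converges[of "1::real"] by (simp add: divide_inverse)

lemma dirichlet_poly_taylor_expansion:
  assumes "N \<ge> 2"
  shows "(\<lambda>k. ((s' - s) * of_real (ln (real N)))^k / fact k * taylor_coeff c N s' k)
           sums (\<Sum>n=1..N. c n * of_nat n powr (-s))"
proof -
  define Lp where "Lp = ln (real N)"
  define z where "z = (s' - s) * of_real Lp"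
  define r where "r n = ln (real n) / Lp" for n
  have "Lp > 0" using assms unfolding Lp_def by simp
  have shift: "c n * of_nat n powr (-s') * exp (z * of_real (r n)) = c n * of_nat n powr (-s)"
    if "n \<ge> 1" for n
  proof -
    have "z * of_real (r n) = (s' - s) * (of_real Lp * of_real (ln (real n)) / of_real Lp)"
      unfolding z_def r_def by (simp add: mult.assoc)
    also have "\<dots> = (s' - s) * of_real (ln (real n))" using \<open>Lp > 0\<close> by simp
    finally have "exp (z * of_real (r n)) = exp ((s' - s) * of_real (ln (real n)))" by simp
    then show ?thesis using that by (simp add: powr_def mult_exp_exp algebra_simps)
  qed
  have "(\<lambda>k. \<Sum>n=1..N. (c n * of_nat n powr (-s')) * ((z * of_real (r n))^k /\<^sub>R fact k))
          sums (\<Sum>n=1..N. (c n * of_nat n powr (-s')) * exp (z * of_real (r n)))"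
    by (intro sums_sum sums_mult exp_converges)
  moreover have "(\<Sum>n=1..N. (c n * of_nat n powr (-s')) * ((z * of_real (r n))^k /\<^sub>R fact k))
               = z^k / fact k * taylor_coeff c N s' k" for k
    unfolding taylor_coeff_def r_def Lp_def
    by (simp add: sum_distrib_left scaleR_conv_of_real power_mult_distrib field_simps)
  ultimately show ?thesis using shift unfolding z_def Lp_def by simp
qed

lemma norm_taylor_term_le:
  assumes "n \<in> {1..N}"
  shows "cmod (c * of_real ((ln (real n) / ln (real N))^k) * of_nat n powr (-s))
         \<le> cmod c * real n powr (- Re s)"
proof -
  have "0 \<le> ln (real n)" "ln (real n) \<le> ln (real N)" using assms by auto
  then have "0 \<le> (ln (real n) / ln (real N))^k" "(ln (real n) / ln (real N))^k \<le> 1"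
    by (auto intro!: power_le_one simp: divide_le_eq_1)
  moreover have "cmod (of_nat n powr (-s)) = real n powr (- Re s)"
    by (subst norm_powr_real_powr) auto
  ultimately show ?thesis
    by (simp only: norm_mult norm_of_real abs_of_nonneg)
      (intro mult_right_mono mult_right_le_one_le; simp)
qed

lemma norm_taylor_coeff_le:
  "cmod (taylor_coeff c N s k) \<le> (\<Sum>n=1..N. cmod (c n) * real n powr (- Re s))"
  unfolding taylor_coeff_def by (intro order_trans[OF norm_sum] sum_mono norm_taylor_term_le)

lemma summable_taylor_mass: "summable (\<lambda>k. (cmod (taylor_coeff c N s k))^2 / fact k)"
proof (rule summable_comparison_test'[where N=0])
  define B where "B = (\<Sum>n=1..N. cmod (c n) * real n powr (- Re s))"
  show "summable (\<lambda>k. B^2 * (1 / fact k))"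
    using inverse_fact_sums by (intro summable_mult sums_summable)
  fix k
  have "(cmod (taylor_coeff c N s k))^2 \<le> B^2"
    unfolding B_def by (intro power_mono norm_taylor_coeff_le) simp
  then show "norm ((cmod (taylor_coeff c N s k))^2 / fact k) \<le> B^2 * (1 / fact k)"
    by (simp add: divide_right_mono)
qed

lemma taylor_mass_nonneg: "taylor_mass c N s \<ge> 0"
  unfolding taylor_mass_def by (intro suminf_nonneg summable_taylor_mass) simp

text \<open>Within distance \<open>1 / ln N\<close> of \<open>s'\<close>, expand around \<open>s'\<close> and apply Cauchy--Schwarz to
  \<open>\<Sum>k. (1 / sqrt k!) (taylor_coeff k / sqrt k!)\<close>; the weights contribute \<open>\<Sum>k. 1/k! = e\<close>.\<close>
lemma norm_dirichlet_poly_sq_le_taylor_mass: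
  assumes N: "N \<ge> 2" and close: "cmod (s - s') * ln (real N) \<le> 1"
  shows "(cmod (\<Sum>n=1..N. c n * of_nat n powr (-s)))\<^sup>2 \<le> exp 1 * taylor_mass c N s'"
proof -
  define z where "z = (s' - s) * of_real (ln (real N))"
  define Y where "Y k = cmod (taylor_coeff c N s' k)" for k
  define t where "t k = z^k / fact k * taylor_coeff c N s' k" for k
  have "cmod z \<le> 1"
    using close N unfolding z_def by (simp add: norm_mult norm_minus_commute)
  have "cmod (t k) \<le> Y k / fact k" for k
  proof -
    have "cmod (t k) = cmod z ^ k / fact k * Y k"
      unfolding t_def Y_def by (simp add: norm_mult norm_divide norm_power)
    also have "\<dots> \<le> 1 / fact k * Y k"
      using \<open>cmod z \<le> 1\<close> unfolding Y_def by (intro mult_right_mono divide_right_mono power_le_one) auto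
    finally show ?thesis by simp
  qed
  have partial: "(cmod (\<Sum>k<K. t k))\<^sup>2 \<le> exp 1 * taylor_mass c N s'" for K
  proof -
    have "cmod (\<Sum>k<K. t k) \<le> (\<Sum>k<K. Y k / fact k)"
      using \<open>\<And>k. cmod (t k) \<le> Y k / fact k\<close> by (intro order_trans[OF norm_sum] sum_mono)
    also have "\<dots> = (\<Sum>k<K. (1 / sqrt (fact k)) * (Y k / sqrt (fact k)))"
      by (intro sum.cong refl) (simp add: field_simps)
    finally have "(cmod (\<Sum>k<K. t k))\<^sup>2 \<le> (\<Sum>k<K. (1 / sqrt (fact k)) * (Y k / sqrt (fact k)))\<^sup>2"
      by (intro power_mono) auto
    also have "\<dots> \<le> (\<Sum>k<K. (1 / sqrt (fact k))\<^sup>2) * (\<Sum>k<K. (Y k / sqrt (fact k))\<^sup>2)"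
      by (rule Cauchy_Schwarz_ineq_sum)
    also have "\<dots> = (\<Sum>k<K. 1 / fact k) * (\<Sum>k<K. Y k ^ 2 / fact k)"
      by (simp add: power_divide)
    also have "\<dots> \<le> exp 1 * taylor_mass c N s'"
      unfolding taylor_mass_def Y_def
      using sum_le_suminf[OF sums_summable[OF inverse_fact_sums], of "{..<K}"]
        sum_le_suminf[OF summable_taylor_mass, of "{..<K}"] sums_unique[OF inverse_fact_sums, symmetric]
      by (intro mult_mono) (auto intro: sum_nonneg)
    finally show ?thesis .
  qed
  have "(\<lambda>K. (cmod (\<Sum>k<K. t k))\<^sup>2) \<longlonglongrightarrow> (cmod (\<Sum>n=1..N. c n * of_nat n powr (-s)))\<^sup>2"
    using dirichlet_poly_taylor_expansion[OF N, of s' s c] unfolding sums_def t_def z_def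
    by (intro tendsto_power tendsto_norm)
  then show ?thesis using partial by (intro LIMSEQ_le_const2) auto
qed

lemma sum_norm_taylor_coeff_sq_dirichlet_chars_le:
  assumes q: "q \<ge> 1" and S: "S \<subseteq> {psi. dirichlet_char q psi}"
    and c: "\<And>n. cmod (c n) \<le> real (divisor_count n)"
  shows "(\<Sum>psi\<in>S. (cmod (taylor_coeff (\<lambda>n. c n * psi n) N s k))\<^sup>2)
         \<le> real (N + q) * (\<Sum>n=1..N. real (divisor_count n)^2 * real n powr (-(2 * Re s)))"
proof -
  define a where "a n = c n * of_real ((ln (real n) / ln (real N))^k) * of_nat n powr (-s)" for n
  have "(\<Sum>psi\<in>S. (cmod (taylor_coeff (\<lambda>n. c n * psi n) N s k))\<^sup>2)
      = (\<Sum>psi\<in>S. (cmod (\<Sum>n=1..N. a n * psi n))\<^sup>2)"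
    unfolding taylor_coeff_def a_def by (simp add: ac_simps)
  also have "\<dots> \<le> real (N + q) * (\<Sum>n=1..N. (cmod (a n))\<^sup>2)"
    by (rule large_sieve_dirichlet_chars[OF q S])
  also have "\<dots> \<le> real (N + q) * (\<Sum>n=1..N. real (divisor_count n)^2 * real n powr (-(2 * Re s)))"
  proof (intro mult_left_mono sum_mono)
    fix n assume "n \<in> {1..N}"
    have "cmod (a n) \<le> real (divisor_count n) * real n powr (- Re s)"
      unfolding a_def
      by (rule order_trans[OF norm_taylor_term_le[OF \<open>n \<in> {1..N}\<close>]]) (simp add: mult_right_mono c)
    then have "(cmod (a n))\<^sup>2 \<le> (real (divisor_count n) * real n powr (- Re s))\<^sup>2"
      by (intro power_mono) auto
    also have "\<dots> = real (divisor_count n)^2 * real n powr (-(2 * Re s))"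
      by (simp add: power_mult_distrib power2_eq_square powr_add[symmetric])
    finally show "(cmod (a n))\<^sup>2 \<le> real (divisor_count n)^2 * real n powr (-(2 * Re s))" .
  qed simp
  finally show ?thesis .
qed

lemma sum_taylor_mass_dirichlet_chars_le:
  assumes q: "q \<ge> 1" and S: "S \<subseteq> {psi. dirichlet_char q psi}"
    and c: "\<And>n. cmod (c n) \<le> real (divisor_count n)"
  shows "(\<Sum>psi\<in>S. taylor_mass (\<lambda>n. c n * psi n) N s)
         \<le> exp 1 * (real (N + q) * (\<Sum>n=1..N. real (divisor_count n)^2 * real n powr (-(2 * Re s))))"
proof -
  define M where "M = (\<Sum>n=1..N. real (divisor_count n)^2 * real n powr (-(2 * Re s)))"
  have "(\<Sum>psi\<in>S. taylor_mass (\<lambda>n. c n * psi n) N s)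
      = (\<Sum>k. \<Sum>psi\<in>S. (cmod (taylor_coeff (\<lambda>n. c n * psi n) N s k))\<^sup>2 / fact k)"
    unfolding taylor_mass_def by (rule suminf_sum[symmetric]) (rule summable_taylor_mass)
  also have "\<dots> \<le> (\<Sum>k. (real (N + q) * M) * (1 / fact k))"
  proof (rule suminf_le)
    show "(\<Sum>psi\<in>S. (cmod (taylor_coeff (\<lambda>n. c n * psi n) N s k))\<^sup>2 / fact k)
          \<le> (real (N + q) * M) * (1 / fact k)" for k
      using sum_norm_taylor_coeff_sq_dirichlet_chars_le[OF q S c, of N s k] unfolding M_def
      by (simp add: sum_divide_distrib[symmetric] divide_right_mono)
    show "summable (\<lambda>k. \<Sum>psi\<in>S. (cmod (taylor_coeff (\<lambda>n. c n * psi n) N s k))\<^sup>2 / fact k)"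
      by (intro summable_sum summable_taylor_mass)
    show "summable (\<lambda>k. (real (N + q) * M) * (1 / fact k))"
      using inverse_fact_sums by (intro summable_mult sums_summable)
  qed
  also have "\<dots> = exp 1 * (real (N + q) * M)"
    using sums_unique[OF sums_mult[OF inverse_fact_sums, of "real (N + q) * M"]] by (simp add: mult.commute)
  finally show ?thesis unfolding M_def .
qed

section \<open>Counting the exceptional characters\<close>

lemma card_mult_le_sum_over_cover:
  fixes f :: "'a \<Rightarrow> real"
  assumes "finite Q" and fin: "\<And>q. q \<in> Q \<Longrightarrow> finite (S q)" and cover: "E \<subseteq> (\<Union>q\<in>Q. S q)"
    and large: "\<And>x. x \<in> E \<Longrightarrow> T \<le> f x" and nonneg: "\<And>q x. q \<in> Q \<Longrightarrow> x \<in> S q \<Longrightarrow> 0 \<le> f x"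
  shows "finite E" "real (card E) * T \<le> (\<Sum>q\<in>Q. \<Sum>x\<in>S q. f x)"
proof -
  have "finite (Sigma Q S)" using \<open>finite Q\<close> fin by (rule finite_SigmaI)
  moreover have union: "(\<Union>q\<in>Q. S q) = snd ` Sigma Q S" by force
  ultimately show "finite E" using cover finite_subset by fastforce
  have "real (card E) * T = (\<Sum>x\<in>E. T)" by simp
  also have "\<dots> \<le> (\<Sum>x\<in>E. f x)" using large by (rule sum_mono)
  also have "\<dots> \<le> (\<Sum>x\<in>snd ` Sigma Q S. f x)"
    using cover \<open>finite (Sigma Q S)\<close> nonneg unfolding union by (intro sum_mono2) auto
  also have "\<dots> \<le> (\<Sum>x\<in>Sigma Q S. f (snd x))"
    by (rule sum_image_le[OF \<open>finite (Sigma Q S)\<close>, of f snd, unfolded comp_def]) (use nonneg in auto)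
  also have "\<dots> = (\<Sum>q\<in>Q. \<Sum>x\<in>S q. f x)"
    using \<open>finite Q\<close> fin by (subst sum.Sigma) (auto simp: case_prod_beta)
  finally show "real (card E) * T \<le> (\<Sum>q\<in>Q. \<Sum>x\<in>S q. f x)" .
qed

lemma grid_index:
  fixes a x h R :: real
  assumes h: "h > 0" and "a \<le> x" "x < a + R"
  obtains i :: nat where "i \<le> nat \<lceil>R/h\<rceil>" "a + real i * h \<le> x" "x < a + real i * h + h"
proof
  define y where "y = (x - a) / h"
  have "y \<ge> 0" "y < R/h" using assms unfolding y_def by (auto simp: divide_strict_right_mono)
  then have "real_of_int \<lfloor>y\<rfloor> < real_of_int \<lceil>R/h\<rceil>"
    using of_int_floor_le[of y] le_of_int_ceiling[of "R/h"] by linarith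
  then show "nat \<lfloor>y\<rfloor> \<le> nat \<lceil>R/h\<rceil>" by (simp add: nat_mono)
  have x: "x = a + y * h" using h unfolding y_def by simp
  show "a + real (nat \<lfloor>y\<rfloor>) * h \<le> x" using \<open>y \<ge> 0\<close> h x by (simp add: mult_right_mono)
  have "y * h < (of_int \<lfloor>y\<rfloor> + 1) * h" using h by (intro mult_strict_right_mono) linarith+
  then show "x < a + real (nat \<lfloor>y\<rfloor>) * h + h" using \<open>y \<ge> 0\<close> x by (simp add: algebra_simps)
qed

lemma sum_moduli_le:
  fixes Q :: real
  assumes "Q \<ge> 1" "real N \<le> Q" and Qs: "Qs \<subseteq> {q. real q < 2 * Q}"
  shows "finite Qs" "(\<Sum>q\<in>Qs. real (N + q)) \<le> 9 * Q^2"
proof -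
  have sub: "Qs \<subseteq> {..< nat \<lceil>2*Q\<rceil>}" using Qs by (auto simp: less_ceiling_iff zless_nat_eq_int_zless)
  then show "finite Qs" by (rule finite_subset) simp
  have "real (card Qs) \<le> real (nat \<lceil>2*Q\<rceil>)" using card_mono[OF _ sub] by simp
  then have card: "real (card Qs) \<le> 2 * Q + 1" using \<open>Q \<ge> 1\<close> by linarith
  have "(\<Sum>q\<in>Qs. real (N + q)) \<le> (\<Sum>q\<in>Qs. 3 * Q)"
    using Qs \<open>real N \<le> Q\<close> by (intro sum_mono) auto
  also have "\<dots> \<le> (2 * Q + 1) * (3 * Q)" using card \<open>Q \<ge> 1\<close> by (simp add: mult_right_mono)
  also have "\<dots> \<le> 9 * Q^2" using \<open>Q \<ge> 1\<close> by (simp add: power2_eq_square algebra_simps)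
  finally show "(\<Sum>q\<in>Qs. real (N + q)) \<le> 9 * Q^2" .
qed

definition exceptional_count_const :: real where
  "exceptional_count_const = 4 * exp 2 * 9 * 5^6 * 22 * (16 * exp 84 * (24 + 2 * 22^4))"

text \<open>The bounds for \<open>F\<close> and \<open>G\<close> on \<open>\<Omega>\<^sub>1\<close> are reduced to finitely many points: \<open>\<Omega>\<^sub>1\<close> is covered by the
  squares of side \<open>1 / (10 \<L>)\<close> at the grid points \<open>grid_point i k\<close>, and inside such a square
  the Taylor expansion around the grid point controls \<open>F\<close> and \<open>G\<close>.\<close>
locale large_modulus_character =
  fixes D :: nat and chi :: "nat \<Rightarrow> complex"
  assumes LL_ge_5: "LL D \<ge> 5" and dirichlet_chi: "dirichlet_char D chi"
begin

abbreviation N :: nat where "N \<equiv> D ^ 5"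

definition grid_step :: real where "grid_step = 1 / (10 * LL D)"

definition grid_point :: "nat \<Rightarrow> nat \<Rightarrow> complex" where
  "grid_point i k = Complex (1/2 - 2 / LL D + real i * grid_step) (real D - 1 - 20 * LL D + real k * grid_step)"

definition grid_width :: nat where "grid_width = nat \<lceil>10 * LL D + 20\<rceil>"

definition grid_height :: nat where "grid_height = nat \<lceil>400 * LL D ^ 2 + 20 * LL D\<rceil>"

definition grid_mass :: "(nat \<Rightarrow> complex) \<Rightarrow> real" where
  "grid_mass psi = (\<Sum>(i, k)\<in>{0..grid_width} \<times> {0..grid_height}.
     taylor_mass (\<lambda>n. nu chi n * psi n) N (grid_point i k)
     + taylor_mass (\<lambda>n. upsilon chi n * psi n) N (grid_point i k))"

definition exceptional_chars :: "(nat \<Rightarrow> complex) set" where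
  "exceptional_chars = {psi \<in> PsiSet D chi.
     \<not> ((SUP s\<in>Omega1 D. cmod (Fsum D chi s psi) + cmod (Gsum D chi s psi)) < LL D ^ 3 * ln (LL D))}"

lemma grid_mass_nonneg: "grid_mass psi \<ge> 0"
  unfolding grid_mass_def by (intro sum_nonneg) (auto intro!: add_nonneg_nonneg taylor_mass_nonneg)

lemma LL_pos: "LL D > 0"
  using LL_ge_5 by simp

lemma real_D_eq: "real D = exp (LL D)"
proof -
  have "D > 0" using LL_ge_5 by (cases D) (auto simp: LL_def)
  then show ?thesis unfolding LL_def by simp
qed

lemma ln_N_eq: "ln (real N) = 5 * LL D"
  by (simp add: real_D_eq ln_realpow)

lemma N_ge_3: "N \<ge> 3"
proof -
  have "exp (5::real) \<ge> 3" using exp_ge_add_one_self[of 5] by linarith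
  moreover have "exp 5 \<le> exp (LL D)" using LL_ge_5 by simp
  ultimately have "real D \<ge> 3" unfolding real_D_eq by linarith
  then have "D \<ge> 3" by simp
  then show ?thesis using power_increasing[of 1 5 D] by simp
qed

lemma N_le_QQ: "real N \<le> QQ D"
proof -
  have "real N = exp (5 * LL D)" by (simp add: real_D_eq flip: exp_of_nat_mult)
  also have "\<dots> \<le> exp (LL D ^ 2)" using LL_ge_5 by (simp add: power2_eq_square)
  finally show ?thesis unfolding QQ_def .
qed

lemma grid_point_near:
  assumes "s \<in> Omega1 D"
  obtains i k where "i \<le> grid_width" "k \<le> grid_height"
    "cmod (s - grid_point i k) * ln (real N) \<le> 1"
proof -
  define L where "L = LL D"
  have "L > 0" using LL_pos unfolding L_def .
  have h: "grid_step > 0" "grid_step = 1 / (10 * L)" using \<open>L > 0\<close> unfolding grid_step_def L_def by auto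
  have "sqrt (alpha D) = 1 / L" using \<open>L > 0\<close> unfolding alpha_def L_def by (simp add: real_sqrt_divide)
  then have "1/2 - 2 / L \<le> Re s" "Re s < (1/2 - 2 / L) + (1 + 2 / L)"
    "real D - 1 - 20 * L \<le> Im s" "Im s < (real D - 1 - 20 * L) + (2 + 40 * L)"
    using assms unfolding Omega1_def s0_def L_def by auto
  moreover have "(1 + 2 / L) / grid_step = 10 * L + 20" "(2 + 40 * L) / grid_step = 400 * L^2 + 20 * L"
    using \<open>L > 0\<close> unfolding h(2) by (simp_all add: field_simps power2_eq_square)
  ultimately obtain i k where i: "i \<le> grid_width" "1/2 - 2 / L + real i * grid_step \<le> Re s"
      "Re s < 1/2 - 2 / L + real i * grid_step + grid_step"
    and k: "k \<le> grid_height" "real D - 1 - 20 * L + real k * grid_step \<le> Im s"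
      "Im s < real D - 1 - 20 * L + real k * grid_step + grid_step"
    using grid_index[OF h(1)] unfolding grid_width_def grid_height_def L_def by metis
  have "cmod (s - grid_point i k) \<le> \<bar>Re (s - grid_point i k)\<bar> + \<bar>Im (s - grid_point i k)\<bar>"
    by (rule cmod_le)
  also have "\<dots> \<le> 2 * grid_step" using i k unfolding grid_point_def L_def by simp
  finally have "cmod (s - grid_point i k) * ln (real N) \<le> 2 * grid_step * (5 * L)"
    using \<open>L > 0\<close> unfolding ln_N_eq L_def by (intro mult_right_mono) auto
  also have "\<dots> = 1" using \<open>L > 0\<close> unfolding h(2) by simp
  finally show ?thesis using that i(1) k(1) by blast
qed

lemma sum_norm_sq_le_grid_mass:
  assumes "s \<in> Omega1 D"
  shows "(cmod (Fsum D chi s psi) + cmod (Gsum D chi s psi))\<^sup>2 \<le> 2 * exp 1 * grid_mass psi"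
proof -
  obtain i k where ik: "i \<le> grid_width" "k \<le> grid_height"
    and close: "cmod (s - grid_point i k) * ln (real N) \<le> 1"
    using grid_point_near[OF assms] .
  have "N \<ge> 2" using N_ge_3 by simp
  let ?mass = "\<lambda>(i, k). taylor_mass (\<lambda>n. nu chi n * psi n) N (grid_point i k)
                       + taylor_mass (\<lambda>n. upsilon chi n * psi n) N (grid_point i k)"
  have F: "(cmod (Fsum D chi s psi))\<^sup>2 \<le> exp 1 * taylor_mass (\<lambda>n. nu chi n * psi n) N (grid_point i k)"
    unfolding Fsum_def by (rule norm_dirichlet_poly_sq_le_taylor_mass[OF \<open>N \<ge> 2\<close> close])
  have G: "(cmod (Gsum D chi s psi))\<^sup>2 \<le> exp 1 * taylor_mass (\<lambda>n. upsilon chi n * psi n) N (grid_point i k)"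
    unfolding Gsum_def by (rule norm_dirichlet_poly_sq_le_taylor_mass[OF \<open>N \<ge> 2\<close> close])
  have "(x + y)\<^sup>2 \<le> 2 * x\<^sup>2 + 2 * y\<^sup>2" for x y :: real
    using zero_le_power2[of "x - y"] by (simp add: power2_eq_square algebra_simps)
  then have "(cmod (Fsum D chi s psi) + cmod (Gsum D chi s psi))\<^sup>2
      \<le> 2 * (cmod (Fsum D chi s psi))\<^sup>2 + 2 * (cmod (Gsum D chi s psi))\<^sup>2" .
  also have "\<dots> \<le> 2 * exp 1 * ?mass (i, k)"
    using F G by (simp add: distrib_left)
  also have "\<dots> \<le> 2 * exp 1 * grid_mass psi"
    unfolding grid_mass_def using ik
    by (intro mult_left_mono member_le_sum) (auto intro!: add_nonneg_nonneg taylor_mass_nonneg)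
  finally show ?thesis .
qed

lemma exceptional_sq_le_grid_mass:
  assumes "psi \<in> exceptional_chars"
  shows "(LL D ^ 3 * ln (LL D))\<^sup>2 \<le> 2 * exp 1 * grid_mass psi"
proof -
  have "s0 D \<in> Omega1 D" using LL_pos unfolding Omega1_def alpha_def by simp
  then have "(SUP s\<in>Omega1 D. cmod (Fsum D chi s psi) + cmod (Gsum D chi s psi))
           \<le> sqrt (2 * exp 1 * grid_mass psi)"
    by (intro cSUP_least real_le_rsqrt sum_norm_sq_le_grid_mass) auto
  moreover have "LL D ^ 3 * ln (LL D) \<le> (SUP s\<in>Omega1 D. cmod (Fsum D chi s psi) + cmod (Gsum D chi s psi))"
    using assms unfolding exceptional_chars_def by auto
  moreover have "LL D ^ 3 * ln (LL D) \<ge> 0" using LL_ge_5 by simp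
  ultimately have "(LL D ^ 3 * ln (LL D))\<^sup>2 \<le> (sqrt (2 * exp 1 * grid_mass psi))\<^sup>2"
    by (intro power_mono) auto
  then show ?thesis using grid_mass_nonneg[of psi] by simp
qed

lemma grid_width_le: "real (grid_width + 1) \<le> 24 * ln (real N) ^ 4"
proof -
  have "real grid_width \<le> 10 * LL D + 21" unfolding grid_width_def using LL_ge_5 by linarith
  moreover have "ln (real N) \<le> ln (real N) ^ 4"
    using LL_ge_5 unfolding ln_N_eq by (intro power_increasing[of 1 4, simplified]) auto
  ultimately show ?thesis using LL_ge_5 unfolding ln_N_eq by simp
qed

lemma grid_height_le: "real (grid_height + 1) \<le> 22 * ln (real N) ^ 2"
proof -
  have "real grid_height \<le> 400 * LL D ^ 2 + 20 * LL D + 1"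
    unfolding grid_height_def using LL_ge_5 by (simp add: add_nonneg_nonneg)
  moreover have "LL D \<le> LL D ^ 2" using LL_ge_5 power_increasing[of 1 2 "LL D"] by simp
  moreover have "1 \<le> LL D ^ 2" using LL_ge_5 by (simp add: one_le_power)
  ultimately show ?thesis unfolding ln_N_eq by (simp add: power_mult_distrib)
qed

lemma two_Re_grid_point: "2 * Re (grid_point i k) = 1 + (real i - 20) / ln (real N)"
  using LL_pos unfolding grid_point_def grid_step_def ln_N_eq by (simp add: field_simps)

lemma sum_grid_mass_le:
  assumes "q \<ge> 1"
  shows "(\<Sum>psi | dirichlet_char q psi. grid_mass psi)
         \<le> 2 * exp 1 * real (N + q) * (22 * (16 * exp 84 * (24 + 2 * 22^4)) * ln (real N) ^ 6)"
proof -
  define Lp where "Lp = ln (real N)"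
  define S where "S = {psi. dirichlet_char q psi}"
  define M where "M i = (\<Sum>n=1..N. real (divisor_count n)^2 * real n powr (-(1 + (real i - 20)/Lp)))"
    for i :: nat
  have point: "(\<Sum>psi\<in>S. taylor_mass (\<lambda>n. nu chi n * psi n) N (grid_point i k)
                     + taylor_mass (\<lambda>n. upsilon chi n * psi n) N (grid_point i k))
             \<le> 2 * exp 1 * real (N + q) * M i" for i k
    using sum_taylor_mass_dirichlet_chars_le[OF assms _, of S "nu chi" N "grid_point i k"]
      sum_taylor_mass_dirichlet_chars_le[OF assms _, of S "upsilon chi" N "grid_point i k"]
      norm_nu_le_divisor_count[OF dirichlet_chi] norm_upsilon_le_divisor_count[OF dirichlet_chi]
    unfolding S_def M_def Lp_def two_Re_grid_point by (simp add: sum.distrib)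
  have "(\<Sum>psi\<in>S. grid_mass psi)
      = (\<Sum>(i, k)\<in>{0..grid_width} \<times> {0..grid_height}.
           \<Sum>psi\<in>S. taylor_mass (\<lambda>n. nu chi n * psi n) N (grid_point i k)
                  + taylor_mass (\<lambda>n. upsilon chi n * psi n) N (grid_point i k))"
    unfolding grid_mass_def by (subst sum.swap) (simp add: case_prod_beta)
  also have "\<dots> \<le> (\<Sum>(i, k)\<in>{0..grid_width} \<times> {0..grid_height}. 2 * exp 1 * real (N + q) * M i)"
    by (rule sum_mono) (simp only: case_prod_beta point)
  also have "\<dots> = 2 * exp 1 * real (N + q) * (\<Sum>i=0..grid_width. \<Sum>k=0..grid_height. M i)"
    by (simp only: sum.cartesian_product[symmetric] sum_distrib_left)
  also have "\<dots> = 2 * exp 1 * real (N + q) * (real (grid_height + 1) * (\<Sum>i=0..grid_width. M i))"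
    by (simp add: sum_distrib_left)
  also have "\<dots> \<le> 2 * exp 1 * real (N + q) * (22 * Lp^2 * (16 * exp 84 * (24 + 2 * 22^4) * Lp^4))"
  proof (intro mult_left_mono mult_mono)
    have "(\<Sum>i=0..grid_width. M i) \<le> 16 * exp 84 * (real (grid_width + 1) + 2 * 22^4 * Lp^4)"
      unfolding M_def Lp_def by (rule sum_divisor_count_sq_powr_grid_le[OF N_ge_3])
    also have "\<dots> \<le> 16 * exp 84 * (24 * Lp^4 + 2 * 22^4 * Lp^4)"
      using grid_width_le unfolding Lp_def by (intro mult_left_mono add_right_mono) auto
    also have "\<dots> = 16 * exp 84 * (24 + 2 * 22^4) * Lp^4" by (simp add: algebra_simps)
    finally show "(\<Sum>i=0..grid_width. M i) \<le> 16 * exp 84 * (24 + 2 * 22^4) * Lp^4" .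
  qed (use grid_height_le in \<open>auto simp: Lp_def M_def intro!: sum_nonneg\<close>)
  finally show ?thesis unfolding S_def Lp_def by (simp add: power_add[symmetric] mult_ac)
qed

lemma card_exceptional_chars_mult_le:
  "finite exceptional_chars \<and>
   real (card exceptional_chars) * (LL D ^ 3 * ln (LL D))\<^sup>2 \<le> LL D ^ 6 * (exceptional_count_const * QQ D ^ 2)"
proof -
  define L where "L = LL D"
  define C where "C = 22 * (16 * exp 84 * (24 + 2 * 22^4::real))"
  have Q: "QQ D \<ge> 1" "real N \<le> QQ D" "QSet D \<subseteq> {q. real q < 2 * QQ D}"
    using N_le_QQ unfolding QQ_def QSet_def by auto
  have q1: "q \<ge> 1" if "q \<in> QSet D" for q
    using that Q(1) unfolding QSet_def by (auto intro: ccontr)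
  have cover: "exceptional_chars \<subseteq> (\<Union>q\<in>QSet D. {psi. dirichlet_char q psi})"
    unfolding exceptional_chars_def PsiSet_def primitive_char_def by blast
  have fin: "finite {psi. dirichlet_char q psi}" if "q \<in> QSet D" for q
    using finite_dirichlet_chars[OF q1[OF that]] .
  have nonneg: "0 \<le> 2 * exp 1 * grid_mass psi" for psi
    using grid_mass_nonneg[of psi] by simp
  note count = card_mult_le_sum_over_cover[OF sum_moduli_le(1)[OF Q] fin cover
      exceptional_sq_le_grid_mass nonneg]
  have "real (card exceptional_chars) * (L^3 * ln L)\<^sup>2
      \<le> (\<Sum>q\<in>QSet D. \<Sum>psi | dirichlet_char q psi. 2 * exp 1 * grid_mass psi)"
    using count(2) unfolding L_def by simp
  also have "\<dots> \<le> (\<Sum>q\<in>QSet D. 2 * exp 1 * (2 * exp 1 * real (N + q) * (C * (5 * L) ^ 6)))"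
  proof (rule sum_mono)
    fix q assume "q \<in> QSet D"
    show "(\<Sum>psi | dirichlet_char q psi. 2 * exp 1 * grid_mass psi)
        \<le> 2 * exp 1 * (2 * exp 1 * real (N + q) * (C * (5 * L) ^ 6))"
      unfolding sum_distrib_left[symmetric]
      using sum_grid_mass_le[OF q1[OF \<open>q \<in> QSet D\<close>]] unfolding C_def L_def ln_N_eq
      by (intro mult_left_mono) auto
  qed
  also have "\<dots> = (2 * exp 1) * (2 * exp 1) * C * (5 * L) ^ 6 * (\<Sum>q\<in>QSet D. real (N + q))"
    by (simp only: sum_distrib_left mult_ac)
  also have "\<dots> \<le> (2 * exp 1) * (2 * exp 1) * C * (5 * L) ^ 6 * (9 * QQ D ^ 2)"
    using sum_moduli_le(2)[OF Q] unfolding C_def by (intro mult_left_mono) auto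
  also have "\<dots> = L^6 * (exceptional_count_const * QQ D ^ 2)"
  proof -
    have "exp (2::real) = exp 1 * exp 1" by (simp add: mult_exp_exp)
    then show ?thesis unfolding exceptional_count_const_def C_def
      by (simp add: power_mult_distrib mult_ac del: mult_exp_exp)
  qed
  finally show ?thesis using count(1) unfolding L_def by simp
qed

lemma card_exceptional_chars_le:
  "finite exceptional_chars \<and>
   real (card exceptional_chars) \<le> exceptional_count_const * ln (LL D) powi (-2) * QQ D ^ 2"
proof -
  have "LL D ^ 6 * (real (card exceptional_chars) * ln (LL D) ^ 2)
      \<le> LL D ^ 6 * (exceptional_count_const * QQ D ^ 2)"
    using card_exceptional_chars_mult_le by (simp add: power_mult_distrib power_mult[symmetric] mult_ac)
  moreover have "LL D > 0" "ln (LL D) > 0" using LL_ge_5 by auto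
  ultimately have "real (card exceptional_chars) \<le> exceptional_count_const * QQ D ^ 2 / ln (LL D) ^ 2"
    by (simp add: pos_le_divide_eq)
  then show ?thesis
    using card_exceptional_chars_mult_le by (simp add: power_int_minus divide_inverse mult_ac)
qed

end

text \<open>The argument works for every character \<open>\<chi>\<close> modulo \<open>D\<close>.\<close>
theorem lemma2p4:
  "\<exists>C D0. \<forall>(D::nat) chi. real D > D0 \<and> primitive_char D chi \<and> real_char chi \<longrightarrow>
     (let E = {psi \<in> PsiSet D chi.
                \<not> ((SUP s\<in>Omega1 D. cmod (Fsum D chi s psi) + cmod (Gsum D chi s psi))
                     < LL D ^ 3 * ln (LL D))}
      in finite E \<and> real (card E) \<le> C * (ln (LL D)) powi (-2) * QQ D ^ 2)"
proof (rule exI[of _ exceptional_count_const], rule exI[of _ "exp 5"], intro allI impI)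
  fix D :: nat and chi :: "nat \<Rightarrow> complex"
  assume "real D > exp 5 \<and> primitive_char D chi \<and> real_char chi"
  then have "exp 5 < real D" and "dirichlet_char D chi" by (auto simp: primitive_char_def)
  moreover have "LL D \<ge> 5"
    unfolding LL_def using \<open>exp 5 < real D\<close> exp_gt_zero[of 5] by (subst ln_ge_iff) linarith+
  ultimately interpret large_modulus_character D chi
    by unfold_locales
  show "let E = {psi \<in> PsiSet D chi.
                \<not> ((SUP s\<in>Omega1 D. cmod (Fsum D chi s psi) + cmod (Gsum D chi s psi))
                     < LL D ^ 3 * ln (LL D))}
      in finite E \<and> real (card E) \<le> exceptional_count_const * (ln (LL D)) powi (-2) * QQ D ^ 2"
    using card_exceptional_chars_le unfolding exceptional_chars_def Let_def .
qed

end
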